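(* Assume (A1). For all $i,j\in I_N$ and $(y,x)\in J_j\times J_i$, $$\mathcal{D}_{\mathrm{junction}}^{ji}(y,x)=\begin{cases}\mathcal{D}_{\mathrm{linear}}^{ji}(y,x)&\text{if }(y,x)\in\Delta^{ji},\\ \mathcal{D}_{\mathrm{implicit}}^{ji}(y,x)&\text{if }(y,x)\in(J_j\times J_i)\setminus\Delta^{ji}.\end{cases}$$
   Context: Junction: fix an integer $N\ge1$ and $N$ distinct unit vectors $e_1,\dots,e_N\in\mathbb{R}^2$. Set $J_i=[0,\infty)e_i$, $J=\bigcup_iJ_i$, $I_N=\{1,\dots,N\}$. Each $x\in J_i$ is written $x=x_ie_i$, $x_i\ge0$. For a function $f$ on $J\times J$ (variables $(y,x)$), $f^{ji}$ denotes its restriction to $J_j\times J_i$. (A1): there is $\gamma>0$ with $L_i\in C^2(\mathbb{R})$, $L_i''\ge\gamma$ for each $i$. $L_0(0)=\min_jL_j(0)$, $I_0=\{l: L_l(0)=L_0(0)\}$. $K_l(\xi)=L_l(\xi)-\xi L_l'(\xi)-L_0(0)$; $\xi_l^-\le0$ (resp. $\xi_l^+\ge0$) is the unique zero of $K_l$ on $(-\infty,0]$ (resp. $[0,\infty)$); these are $0$ iff $l\in I_0$. For $\tau\in[0,1]$: $\mathcal{E}_1(\tau,y)=\tau L_j(-y_j/\tau)-\tau L_0(0)$ if $y=y_je_j\ne0$, $\tau\ne0$; $\mathcal{E}_1(\tau,0)=0$; $\mathcal{E}_1(0,y)=+\infty$ if $y\ne0$. $\mathcal{E}_2(\tau,x)=(1-\tau)L_i(x_i/(1-\tau))+\tau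 L_0(0)$ if $x=x_ie_i\ne0$, $\tau\ne1$; $\mathcal{E}_2(\tau,0)=L_0(0)$; $\mathcal{E}_2(1,x)=+\infty$ if $x\ne0$. Define $\mathcal{D}_{\mathrm{junction}}(y,x)=\inf_{0\le\tau_1\le\tau_2\le1}\{\mathcal{E}_1(\tau_1,y)+\mathcal{E}_2(\tau_2,x)\}$ and $\mathcal{D}_{\mathrm{implicit}}(y,x)=\inf_{0\le\tau\le1}\{\mathcal{E}_1(\tau,y)+\mathcal{E}_2(\tau,x)\}$. For $(y,x)\in J_j\times J_i$: $\mathcal{D}_{\mathrm{linear}}^{ji}(y,x)=-L_j'(\xi_j^-)y_j+L_i'(\xi_i^+)x_i+L_0(0)$. If $i,j\notin I_0$, $\Delta^{ji}=\{(y,x)\in J_j\times J_i: x_i/\xi_i^+-y_j/\xi_j^-<1\}$; if $i\in I_0$ or $j\in I_0$, $\Delta^{ji}=\emptyset$. *)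

theory Defs
  imports "HOL-Analysis.Analysis"
begin

text \<open>Junction in the plane: branches J_i = [0,oo) e_i, points are vectors in real^2.
  For x in J_i the coordinate x_i equals the inner product x \<bullet> e_i.\<close>

definition Jray :: "(nat \<Rightarrow> real^2) \<Rightarrow> nat \<Rightarrow> (real^2) set" where
  "Jray e i = {t *\<^sub>R e i | t. t \<ge> 0}"

definition Jset :: "(nat \<Rightarrow> real^2) \<Rightarrow> nat \<Rightarrow> (real^2) set" where
  "Jset e N = (\<Union>i\<in>{1..N}. Jray e i)"

definition coord :: "(nat \<Rightarrow> real^2) \<Rightarrow> nat \<Rightarrow> real^2 \<Rightarrow> real" where
  "coord e i x = x \<bullet> e i"

definition branch :: "(nat \<Rightarrow> real^2) \<Rightarrow> nat \<Rightarrow> real^2 \<Rightarrow> nat" where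
  "branch e N y = (THE j. j \<in> {1..N} \<and> y \<in> Jray e j)"

definition L00 :: "(nat \<Rightarrow> real \<Rightarrow> real) \<Rightarrow> nat \<Rightarrow> real" where
  "L00 L N = Min ((\<lambda>j. L j 0) ` {1..N})"

definition I0 :: "(nat \<Rightarrow> real \<Rightarrow> real) \<Rightarrow> nat \<Rightarrow> nat set" where
  "I0 L N = {l \<in> {1..N}. L l 0 = L00 L N}"

definition Kfun :: "(nat \<Rightarrow> real \<Rightarrow> real) \<Rightarrow> nat \<Rightarrow> nat \<Rightarrow> real \<Rightarrow> real" where
  "Kfun L N l \<xi> = L l \<xi> - \<xi> * deriv (L l) \<xi> - L00 L N"

definition xi_minus :: "(nat \<Rightarrow> real \<Rightarrow> real) \<Rightarrow> nat \<Rightarrow> nat \<Rightarrow> real" where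
  "xi_minus L N l = (THE \<xi>. \<xi> \<le> 0 \<and> Kfun L N l \<xi> = 0)"

definition xi_plus :: "(nat \<Rightarrow> real \<Rightarrow> real) \<Rightarrow> nat \<Rightarrow> nat \<Rightarrow> real" where
  "xi_plus L N l = (THE \<xi>. \<xi> \<ge> 0 \<and> Kfun L N l \<xi> = 0)"

definition E1 :: "(nat \<Rightarrow> real^2) \<Rightarrow> nat \<Rightarrow> (nat \<Rightarrow> real \<Rightarrow> real) \<Rightarrow> real \<Rightarrow> real^2 \<Rightarrow> ereal" where
  "E1 e N L \<tau> y =
     (if y = 0 then 0
      else if \<tau> = 0 then \<infinity>
      else (let j = branch e N y in
            ereal (\<tau> * L j (- coord e j y / \<tau>) - \<tau> * L00 L N)))"

definition E2 :: "(nat \<Rightarrow> real^2) \<Rightarrow> nat \<Rightarrow> (nat \<Rightarrow> real \<Rightarrow> real) \<Rightarrow> real \<Rightarrow> real^2 \<Rightarrow> ereal" where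
  "E2 e N L \<tau> x =
     (if x = 0 then ereal (L00 L N)
      else if \<tau> = 1 then \<infinity>
      else (let i = branch e N x in
            ereal ((1 - \<tau>) * L i (coord e i x / (1 - \<tau>)) + \<tau> * L00 L N)))"

definition D_junction :: "(nat \<Rightarrow> real^2) \<Rightarrow> nat \<Rightarrow> (nat \<Rightarrow> real \<Rightarrow> real) \<Rightarrow> real^2 \<Rightarrow> real^2 \<Rightarrow> ereal" where
  "D_junction e N L y x =
     Inf {E1 e N L \<tau>1 y + E2 e N L \<tau>2 x | \<tau>1 \<tau>2. 0 \<le> \<tau>1 \<and> \<tau>1 \<le> \<tau>2 \<and> \<tau>2 \<le> 1}"

definition D_implicit :: "(nat \<Rightarrow> real^2) \<Rightarrow> nat \<Rightarrow> (nat \<Rightarrow> real \<Rightarrow> real) \<Rightarrow> real^2 \<Rightarrow> real^2 \<Rightarrow> ereal" where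
  "D_implicit e N L y x =
     Inf {E1 e N L \<tau> y + E2 e N L \<tau> x | \<tau>. 0 \<le> \<tau> \<and> \<tau> \<le> 1}"

definition D_linear :: "(nat \<Rightarrow> real^2) \<Rightarrow> nat \<Rightarrow> (nat \<Rightarrow> real \<Rightarrow> real) \<Rightarrow> nat \<Rightarrow> nat \<Rightarrow> real^2 \<Rightarrow> real^2 \<Rightarrow> real" where
  "D_linear e N L j i y x =
     - deriv (L j) (xi_minus L N j) * coord e j y + deriv (L i) (xi_plus L N i) * coord e i x + L00 L N"

definition Delta :: "(nat \<Rightarrow> real^2) \<Rightarrow> nat \<Rightarrow> (nat \<Rightarrow> real \<Rightarrow> real) \<Rightarrow> nat \<Rightarrow> nat \<Rightarrow> ((real^2) \<times> (real^2)) set" where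
  "Delta e N L j i =
     (if i \<notin> I0 L N \<and> j \<notin> I0 L N then
        {(y, x). y \<in> Jray e j \<and> x \<in> Jray e i \<and>
                 coord e i x / xi_plus L N i - coord e j y / xi_minus L N j < 1}
      else {})"

end

theory Submission
  imports Defs
begin

text \<open>
  Fix the endpoints \<open>y \<in> J_j\<close> and \<open>x \<in> J_i\<close> and write \<open>a = y_j\<close>, \<open>b = x_i\<close>.  As a
  function of the time \<open>\<tau>\<close>, the cost \<open>E_1(\<tau>, y)\<close> of the incoming leg is the perspective
  \<open>\<tau> L_j(-a/\<tau>) - \<tau> L_0(0)\<close>, whose derivative is \<open>K_j(-a/\<tau>)\<close>.  By strong convexity \<open>K_j\<close> is
  increasing on \<open>(-\<infinity>, 0]\<close> with the single zero \<open>\<xi>_j\<^sup>-\<close>, so \<open>E_1(\<cdot>, y)\<close> decreases up to the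
  "arrival time" \<open>p = min 1 (a / -\<xi>_j\<^sup>-)\<close> and increases afterwards: it is a valley on \<open>[0,1]\<close>.
  Reflecting \<open>u \<mapsto> -u\<close> and \<open>\<tau> \<mapsto> 1 - \<tau>\<close> turns the outgoing cost \<open>E_2(\<cdot>, x)\<close> into the same kind of
  function, a valley with bottom at the "departure time" \<open>q = max 0 (1 - b / \<xi>_i\<^sup>+)\<close>.
  For two valleys, the infimum over \<open>\<tau>_1 \<le> \<tau>_2\<close> of \<open>g(\<tau>_1) + h(\<tau>_2)\<close> equals \<open>g p + h q\<close> if
  \<open>p \<le> q\<close> and the infimum along the diagonal if \<open>q \<le> p\<close>.  Finally \<open>\<Delta>\<^sup>j\<^sup>i\<close> is exactly the
  set where \<open>p < q\<close>, and there \<open>g p + h q\<close> evaluates to \<open>D_linear\<close>.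
\<close>

text \<open>A function on \<open>[0,1]\<close> is a \<^emph>\<open>valley\<close> with bottom \<open>p\<close> if it is antitone on \<open>[0,p]\<close> and
  monotone on \<open>[p,1]\<close>; both legs of a junction trajectory have costs of this shape.\<close>
definition valley :: "(real \<Rightarrow> ereal) \<Rightarrow> real \<Rightarrow> bool" where
  "valley g p \<longleftrightarrow> 0 \<le> p \<and> p \<le> 1
     \<and> (\<forall>s t. 0 \<le> s \<longrightarrow> s \<le> t \<longrightarrow> t \<le> p \<longrightarrow> g t \<le> g s)
     \<and> (\<forall>s t. p \<le> s \<longrightarrow> s \<le> t \<longrightarrow> t \<le> 1 \<longrightarrow> g s \<le> g t)"

lemma valleyI:
  assumes "0 \<le> p" "p \<le> 1"
    and "\<And>s t. 0 \<le> s \<Longrightarrow> s \<le> t \<Longrightarrow> t \<le> p \<Longrightarrow> g t \<le> g s"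
    and "\<And>s t. p \<le> s \<Longrightarrow> s \<le> t \<Longrightarrow> t \<le> 1 \<Longrightarrow> g s \<le> g t"
  shows "valley g p"
  using assms unfolding valley_def by blast

lemma valleyD:
  assumes "valley g p"
  shows "0 \<le> p" "p \<le> 1"
    and "\<And>s t. 0 \<le> s \<Longrightarrow> s \<le> t \<Longrightarrow> t \<le> p \<Longrightarrow> g t \<le> g s"
    and "\<And>s t. p \<le> s \<Longrightarrow> s \<le> t \<Longrightarrow> t \<le> 1 \<Longrightarrow> g s \<le> g t"
  using assms unfolding valley_def by blast+

lemma valley_min:
  assumes "valley g p" "0 \<le> t" "t \<le> 1"
  shows "g p \<le> g t"
  using valleyD[OF assms(1)] assms(2,3) by (cases "t \<le> p") auto

text \<open>Reversing time and adding a constant preserves the valley shape; this turns the outgoing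
  cost into a function of the incoming type.\<close>
lemma valley_reflect:
  assumes "valley g p"
  shows "valley (\<lambda>\<tau>. g (1 - \<tau>) + ereal c) (1 - p)"
  using valleyD[OF assms] by (intro valleyI) (auto intro: add_right_mono)

lemma valley_inf_overlap:
  assumes g: "valley g p" and h: "valley h q" and qp: "q \<le> p"
  shows "Inf {g t1 + h t2 | t1 t2. 0 \<le> t1 \<and> t1 \<le> t2 \<and> t2 \<le> 1}
       = Inf {g t + h t | t. 0 \<le> t \<and> t \<le> 1}"
proof (rule antisym)
  show "Inf {g t1 + h t2 | t1 t2. 0 \<le> t1 \<and> t1 \<le> t2 \<and> t2 \<le> 1}
      \<le> Inf {g t + h t | t. 0 \<le> t \<and> t \<le> 1}"
    by (rule Inf_superset_mono) blast
next
  \<comment> \<open>Each admissible pair is beaten by the diagonal at \<open>t2\<close>, at \<open>t1\<close> or at \<open>p\<close>.\<close>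
  have diagonal_better: "\<exists>t. 0 \<le> t \<and> t \<le> 1 \<and> g t + h t \<le> g t1 + h t2"
    if t: "0 \<le> t1" "t1 \<le> t2" "t2 \<le> 1" for t1 t2
  proof -
    note G = valleyD[OF g] and H = valleyD[OF h]
    consider "t2 \<le> p" | "q \<le> t1" | "t1 < q" "p < t2" by linarith
    then show ?thesis
    proof cases
      case 1
      then show ?thesis using t G(3)[of t1 t2] by (intro exI[of _ t2]) (auto intro: add_right_mono)
    next
      case 2
      then show ?thesis using t H(4)[of t1 t2] by (intro exI[of _ t1]) (auto intro: add_left_mono)
    next
      case 3
      then show ?thesis using t qp G(1,2) G(3)[of t1 p] H(4)[of p t2]
        by (intro exI[of _ p]) (auto intro: add_mono)
    qed
  qed
  show "Inf {g t + h t | t. 0 \<le> t \<and> t \<le> 1}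
      \<le> Inf {g t1 + h t2 | t1 t2. 0 \<le> t1 \<and> t1 \<le> t2 \<and> t2 \<le> 1}"
  proof (rule Inf_greatest, clarify)
    fix t1 t2 :: real assume "0 \<le> t1" "t1 \<le> t2" "t2 \<le> 1"
    then obtain t where "0 \<le> t" "t \<le> 1" "g t + h t \<le> g t1 + h t2"
      using diagonal_better by blast
    then show "Inf {g t + h t | t. 0 \<le> t \<and> t \<le> 1} \<le> g t1 + h t2"
      by (intro Inf_lower2[of "g t + h t"]) blast+
  qed
qed

lemma valley_inf_separated:
  assumes g: "valley g p" and h: "valley h q" and pq: "p \<le> q"
  shows "Inf {g t1 + h t2 | t1 t2. 0 \<le> t1 \<and> t1 \<le> t2 \<and> t2 \<le> 1} = g p + h q"
proof (rule antisym)
  show "Inf {g t1 + h t2 | t1 t2. 0 \<le> t1 \<and> t1 \<le> t2 \<and> t2 \<le> 1} \<le> g p + h q"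
    using valleyD(1)[OF g] valleyD(2)[OF h] pq by (intro Inf_lower) blast
  show "g p + h q \<le> Inf {g t1 + h t2 | t1 t2. 0 \<le> t1 \<and> t1 \<le> t2 \<and> t2 \<le> 1}"
    using valley_min[OF g] valley_min[OF h] by (intro Inf_greatest) (force intro: add_mono)
qed

text \<open>The Legendre gap \<open>K(\<xi>) = f(\<xi>) - \<xi> f'(\<xi>) - c\<close> of a function (the \<open>K_l\<close> of the paper),
  and its zero on \<open>(-\<infinity>, 0]\<close>.  The zero on \<open>[0, \<infinity>)\<close> is obtained by reflection, see
  \<open>legendre_gap_reflect\<close>.\<close>
definition legendre_gap :: "(real \<Rightarrow> real) \<Rightarrow> (real \<Rightarrow> real) \<Rightarrow> real \<Rightarrow> real \<Rightarrow> real" where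
  "legendre_gap f f1 c \<xi> = f \<xi> - \<xi> * f1 \<xi> - c"

definition nonpos_zero :: "(real \<Rightarrow> real) \<Rightarrow> (real \<Rightarrow> real) \<Rightarrow> real \<Rightarrow> real" where
  "nonpos_zero f f1 c = (THE \<xi>. \<xi> \<le> 0 \<and> legendre_gap f f1 c \<xi> = 0)"

lemma legendre_gap_reflect:
  "legendre_gap (\<lambda>u. f (- u)) (\<lambda>u. - f1 (- u)) c s = legendre_gap f f1 c (- s)"
  by (simp add: legendre_gap_def)

text \<open>The perspective \<open>\<tau> f(-a/\<tau>) - \<tau> c\<close> is the cost of travelling a distance \<open>a\<close> towards the
  junction in time \<open>\<tau>\<close>; it is extended by \<open>\<infinity>\<close> at \<open>\<tau> = 0\<close> and by \<open>0\<close> when \<open>a = 0\<close>, as in \<open>E_1\<close>.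
  Its valley bottom is the turning time \<open>a / -\<xi>\<close>, truncated to \<open>[0,1]\<close>.\<close>
definition perspective :: "(real \<Rightarrow> real) \<Rightarrow> real \<Rightarrow> real \<Rightarrow> real \<Rightarrow> ereal" where
  "perspective f c a \<tau> =
     (if a = 0 then 0 else if \<tau> = 0 then \<infinity> else ereal (\<tau> * f (- a / \<tau>) - \<tau> * c))"

definition turning_time :: "real \<Rightarrow> real \<Rightarrow> real" where
  "turning_time a \<xi> = (if \<xi> = 0 then 1 else min 1 (a / - \<xi>))"

text \<open>Hypothesis (A1) for a single branch: \<open>f\<close> is twice differentiable with \<open>f'' \<ge> \<gamma> > 0\<close>.\<close>
locale strongly_convex_lagrangian =
  fixes f f1 f2 :: "real \<Rightarrow> real" and \<gamma> :: real
  assumes f_deriv: "\<And>t. (f has_real_derivative f1 t) (at t)"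
    and f1_deriv: "\<And>t. (f1 has_real_derivative f2 t) (at t)"
    and f2_ge: "\<And>t. \<gamma> \<le> f2 t"
    and gamma_pos: "0 < \<gamma>"
begin

lemma reflect: "strongly_convex_lagrangian (\<lambda>u. f (- u)) (\<lambda>u. - f1 (- u)) (\<lambda>u. f2 (- u)) \<gamma>"
proof
  fix t
  show "((\<lambda>u. f (- u)) has_real_derivative - f1 (- t)) (at t)"
    using DERIV_mirror[of f "f1 (- t)" t] f_deriv by simp
  have "((\<lambda>u. f1 (- u)) has_real_derivative - f2 (- t)) (at t)"
    using DERIV_mirror[of f1 "f2 (- t)" t] f1_deriv by simp
  then show "((\<lambda>u. - f1 (- u)) has_real_derivative f2 (- t)) (at t)"
    using DERIV_minus by fastforce
qed (use f2_ge gamma_pos in auto)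

lemma gap_deriv: "(legendre_gap f f1 c has_real_derivative - t * f2 t) (at t)"
  unfolding legendre_gap_def
  by (auto intro!: derivative_eq_intros f_deriv f1_deriv simp: algebra_simps)

lemma gap_strict_mono:
  assumes "s < t" "t \<le> 0"
  shows "legendre_gap f f1 c s < legendre_gap f f1 c t"
proof (rule DERIV_pos_imp_increasing_open[OF \<open>s < t\<close>])
  fix u assume "s < u" "u < t"
  then have "0 < - u * f2 u"
    using assms f2_ge[of u] gamma_pos by (intro mult_pos_pos) auto
  then show "\<exists>d. (legendre_gap f f1 c has_real_derivative d) (at u) \<and> 0 < d"
    using gap_deriv by blast
next
  show "continuous_on {s..t} (legendre_gap f f1 c)"
    using gap_deriv by (meson DERIV_isCont continuous_at_imp_continuous_on)
qed

lemma gap_linear_bound: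
  assumes "s \<le> -1"
  shows "legendre_gap f f1 c s \<le> legendre_gap f f1 c (-1) + \<gamma> * (1 + s)"
proof -
  have "legendre_gap f f1 c s - \<gamma> * s \<le> legendre_gap f f1 c (-1) - \<gamma> * (-1)"
  proof (rule deriv_nonneg_imp_mono[OF _ _ assms])
    fix u assume u: "u \<in> {s..-1}"
    show "((\<lambda>u. legendre_gap f f1 c u - \<gamma> * u) has_real_derivative - u * f2 u - \<gamma>) (at u)"
      by (auto intro!: derivative_eq_intros gap_deriv)
    have "1 * f2 u \<le> - u * f2 u"
      using u f2_ge[of u] gamma_pos by (intro mult_right_mono) auto
    then show "0 \<le> - u * f2 u - \<gamma>" using f2_ge[of u] by linarith
  qed
  then show ?thesis by (simp add: algebra_simps)
qed

text \<open>If \<open>K(0) \<ge> 0\<close>, the intermediate value theorem gives a unique zero on \<open>(-\<infinity>, 0]\<close>.\<close>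
lemma gap_zero_unique:
  assumes "c \<le> f 0"
  shows "\<exists>!\<xi>. \<xi> \<le> 0 \<and> legendre_gap f f1 c \<xi> = 0"
proof -
  define K where "K = legendre_gap f f1 c"
  define s0 where "s0 = -1 - \<bar>K (-1)\<bar> / \<gamma>"
  have s0: "s0 \<le> -1" unfolding s0_def using gamma_pos by simp
  have "K s0 \<le> K (-1) + \<gamma> * (1 + s0)"
    using gap_linear_bound[OF s0] unfolding K_def .
  also have "\<dots> = K (-1) - \<bar>K (-1)\<bar>"
    using gamma_pos by (simp add: s0_def algebra_simps)
  finally have "K s0 \<le> 0" by simp
  moreover have "0 \<le> K 0" using assms by (simp add: K_def legendre_gap_def)
  moreover have "isCont K t" for t using gap_deriv DERIV_isCont unfolding K_def by blast
  ultimately obtain \<xi> where "\<xi> \<le> 0" "K \<xi> = 0"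
    using IVT[of K s0 0 0] s0 by auto
  moreover have "\<eta> = \<xi>" if "\<eta> \<le> 0" "K \<eta> = 0" for \<eta>
    using gap_strict_mono[of \<eta> \<xi> c] gap_strict_mono[of \<xi> \<eta> c] that \<open>\<xi> \<le> 0\<close> \<open>K \<xi> = 0\<close>
    unfolding K_def by (cases "\<eta> < \<xi>"; cases "\<xi> < \<eta>") auto
  ultimately show ?thesis unfolding K_def by blast
qed

lemma nonpos_zero:
  assumes "c \<le> f 0"
  defines "\<xi> \<equiv> nonpos_zero f f1 c"
  shows "\<xi> \<le> 0" "legendre_gap f f1 c \<xi> = 0"
    and "\<And>s. s \<le> \<xi> \<Longrightarrow> legendre_gap f f1 c s \<le> 0"
    and "\<And>s. \<xi> \<le> s \<Longrightarrow> s \<le> 0 \<Longrightarrow> 0 \<le> legendre_gap f f1 c s"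
proof -
  show zero: "\<xi> \<le> 0" "legendre_gap f f1 c \<xi> = 0"
    using theI'[OF gap_zero_unique[OF assms(1)]] unfolding \<xi>_def nonpos_zero_def by auto
  show "legendre_gap f f1 c s \<le> 0" if "s \<le> \<xi>" for s
    using gap_strict_mono[of s \<xi> c] zero that by (cases "s = \<xi>") auto
  show "0 \<le> legendre_gap f f1 c s" if "\<xi> \<le> s" "s \<le> 0" for s
    using gap_strict_mono[of \<xi> s c] zero that by (cases "s = \<xi>") auto
qed

lemma nonpos_zero_unique:
  assumes "c \<le> f 0" "\<xi> \<le> 0" "legendre_gap f f1 c \<xi> = 0"
  shows "nonpos_zero f f1 c = \<xi>"
  unfolding nonpos_zero_def using gap_zero_unique[OF assms(1)] assms(2,3) by (simp add: the1_equality)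

lemma nonpos_zero_eq_0_iff:
  assumes "c \<le> f 0"
  shows "nonpos_zero f f1 c = 0 \<longleftrightarrow> f 0 = c"
  using nonpos_zero(2)[OF assms] nonpos_zero_unique[OF assms, of 0]
  by (auto simp: legendre_gap_def)

lemma perspective_deriv:
  assumes "t \<noteq> 0"
  shows "((\<lambda>\<tau>. \<tau> * f (- a / \<tau>) - \<tau> * c) has_real_derivative legendre_gap f f1 c (- a / t)) (at t)"
proof -
  have "((\<lambda>\<tau>. \<tau> * f (- a / \<tau>) - \<tau> * c) has_real_derivative
          f (- a / t) + t * (f1 (- a / t) * (a / t\<^sup>2)) - c) (at t)"
    using assms by (auto intro!: derivative_eq_intros DERIV_chain2[OF f_deriv]
                      simp: power2_eq_square field_simps)
  moreover have "f (- a / t) + t * (f1 (- a / t) * (a / t\<^sup>2)) - c = legendre_gap f f1 c (- a / t)"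
    using assms by (simp add: legendre_gap_def power2_eq_square field_simps)
  ultimately show ?thesis by simp
qed

lemma perspective_antimono:
  assumes "0 \<le> s" "s \<le> t"
    and gap: "\<And>\<tau>. 0 < \<tau> \<Longrightarrow> \<tau> \<le> t \<Longrightarrow> legendre_gap f f1 c (- a / \<tau>) \<le> 0"
  shows "perspective f c a t \<le> perspective f c a s"
proof (cases "a = 0 \<or> s = 0")
  case False
  have "t * f (- a / t) - t * c \<le> s * f (- a / s) - s * c"
  proof (rule deriv_nonpos_imp_antimono[OF _ _ \<open>s \<le> t\<close>])
    fix \<tau> assume "\<tau> \<in> {s..t}"
    with False assms(1) have "0 < \<tau>" "\<tau> \<le> t" by auto
    then show "((\<lambda>\<tau>. \<tau> * f (- a / \<tau>) - \<tau> * c) has_real_derivative legendre_gap f f1 c (- a / \<tau>)) (at \<tau>)"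
      and "legendre_gap f f1 c (- a / \<tau>) \<le> 0"
      using perspective_deriv gap by auto
  qed
  then show ?thesis using False assms by (simp add: perspective_def)
qed (auto simp: perspective_def)

lemma perspective_mono:
  assumes "0 < s" "s \<le> t"
    and gap: "\<And>\<tau>. s \<le> \<tau> \<Longrightarrow> \<tau> \<le> t \<Longrightarrow> 0 \<le> legendre_gap f f1 c (- a / \<tau>)"
  shows "perspective f c a s \<le> perspective f c a t"
proof (cases "a = 0")
  case False
  have "s * f (- a / s) - s * c \<le> t * f (- a / t) - t * c"
  proof (rule deriv_nonneg_imp_mono[OF _ _ \<open>s \<le> t\<close>])
    fix \<tau> assume "\<tau> \<in> {s..t}"
    with assms(1) have "0 < \<tau>" "s \<le> \<tau>" "\<tau> \<le> t" by auto
    then show "((\<lambda>\<tau>. \<tau> * f (- a / \<tau>) - \<tau> * c) has_real_derivative legendre_gap f f1 c (- a / \<tau>)) (at \<tau>)"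
      and "0 \<le> legendre_gap f f1 c (- a / \<tau>)"
      using perspective_deriv gap by auto
  qed
  then show ?thesis using False assms by (simp add: perspective_def)
qed (simp add: perspective_def)

text \<open>Before the turning time \<open>a / -\<xi>\<close> the velocity \<open>-a/\<tau>\<close> lies left of \<open>\<xi>\<close>, after it in \<open>[\<xi>, 0]\<close>;
  so the sign pattern of \<open>K\<close> makes the perspective a valley with bottom at the turning time.\<close>
lemma perspective_valley:
  assumes c: "c \<le> f 0" and a: "0 \<le> a"
  shows "valley (perspective f c a) (turning_time a (nonpos_zero f f1 c))"
proof -
  define \<xi> where "\<xi> = nonpos_zero f f1 c"
  define p where "p = turning_time a \<xi>"
  note \<xi> = nonpos_zero[OF c, folded \<xi>_def]
  have p01: "0 \<le> p" "p \<le> 1"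
    using a \<xi>(1) by (auto simp: p_def turning_time_def divide_nonneg_nonpos)
  have dec: "perspective f c a t \<le> perspective f c a s" if "0 \<le> s" "s \<le> t" "t \<le> p" for s t
  proof (rule perspective_antimono[OF that(1,2)])
    fix \<tau> assume \<tau>: "0 < \<tau>" "\<tau> \<le> t"
    have "- a / \<tau> \<le> \<xi>"
    proof (cases "\<xi> = 0")
      case False
      then have "\<tau> \<le> a / - \<xi>" using \<tau> that(3) \<xi>(1) by (auto simp: p_def turning_time_def)
      then show ?thesis using \<tau> False \<xi>(1) by (simp add: field_simps)
    qed (use \<tau> a in simp)
    then show "legendre_gap f f1 c (- a / \<tau>) \<le> 0" by (rule \<xi>(3))
  qed
  have inc: "perspective f c a s \<le> perspective f c a t" if "p \<le> s" "s \<le> t" "t \<le> 1" for s t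
  proof (cases "a = 0 \<or> s = t")
    case False
    then have "p < 1" "0 < a" using that a by auto
    then have \<xi>_neg: "\<xi> < 0" and p: "p = a / - \<xi>"
      using \<xi>(1) by (auto simp: p_def turning_time_def split: if_splits)
    then have "0 < p" using \<open>0 < a\<close> by (simp add: divide_pos_neg)
    show ?thesis
    proof (rule perspective_mono)
      fix \<tau> assume \<tau>: "s \<le> \<tau>" "\<tau> \<le> t"
      then have "a / - \<xi> \<le> \<tau>" "0 < \<tau>" using that p \<open>0 < p\<close> by auto
      then have "\<xi> \<le> - a / \<tau>" "- a / \<tau> \<le> 0" using \<xi>_neg a by (auto simp: field_simps)
      then show "0 \<le> legendre_gap f f1 c (- a / \<tau>)" by (rule \<xi>(4))
    qed (use that \<open>0 < p\<close> in auto)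
  qed (auto simp: perspective_def)
  show ?thesis unfolding p_def[symmetric] \<xi>_def[symmetric] using p01 dec inc by (rule valleyI)
qed

text \<open>At the turning time the velocity is \<open>\<xi>\<close>, and \<open>K(\<xi>) = 0\<close> makes the cost linear in \<open>a\<close>.\<close>
lemma perspective_at_turning:
  assumes c: "c \<le> f 0" and a: "0 \<le> a" and \<xi>_neg: "nonpos_zero f f1 c < 0"
  defines "\<xi> \<equiv> nonpos_zero f f1 c"
  shows "perspective f c a (a / - \<xi>) = ereal (- a * f1 \<xi>)"
proof (cases "a = 0")
  case False
  have \<xi>: "f \<xi> - c = \<xi> * f1 \<xi>"
    using nonpos_zero(2)[OF c] unfolding \<xi>_def[symmetric] legendre_gap_def by simp
  have "(a / - \<xi>) * f (- a / (a / - \<xi>)) - (a / - \<xi>) * c = (a / - \<xi>) * (f \<xi> - c)"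
    using False \<xi>_neg unfolding \<xi>_def by (simp add: algebra_simps)
  also have "\<dots> = - a * f1 \<xi>"
    using \<xi>_neg unfolding \<xi> \<xi>_def[symmetric] by (simp add: field_simps)
  finally show ?thesis using False \<xi>_neg by (simp add: perspective_def \<xi>_def)
qed (simp add: perspective_def)

end

lemma ray_coord:
  assumes "norm (e j) = 1" "y \<in> Jray e j"
  shows "y = coord e j y *\<^sub>R e j" "0 \<le> coord e j y"
proof -
  obtain t where t: "0 \<le> t" "y = t *\<^sub>R e j" using assms(2) unfolding Jray_def by auto
  have "e j \<bullet> e j = 1" using assms(1) by (simp add: dot_square_norm)
  then have "coord e j y = t" unfolding coord_def t(2) by simp
  then show "y = coord e j y *\<^sub>R e j" "0 \<le> coord e j y" using t by auto
qed

lemma ray_eq_0_iff: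
  assumes "norm (e j) = 1" "y \<in> Jray e j"
  shows "y = 0 \<longleftrightarrow> coord e j y = 0"
  using ray_coord[OF assms] assms(1) by (metis norm_zero scaleR_eq_0_iff zero_neq_one)

lemma branch_eq:
  assumes unit: "\<forall>k\<in>{1..N}. norm (e k) = 1" and inj: "inj_on e {1..N}"
    and j: "j \<in> {1..N}" and y: "y \<in> Jray e j" and y0: "y \<noteq> 0"
  shows "branch e N y = j"
  unfolding branch_def
proof (rule the_equality)
  show "j \<in> {1..N} \<and> y \<in> Jray e j" using j y by simp
  fix k assume k: "k \<in> {1..N} \<and> y \<in> Jray e k"
  obtain a where a: "0 \<le> a" "y = a *\<^sub>R e j" using y unfolding Jray_def by auto
  obtain t where t: "0 \<le> t" "y = t *\<^sub>R e k" using k unfolding Jray_def by auto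
  have "norm (e j) = 1" "norm (e k) = 1" using unit j k by auto
  then have "a = t" using a t by (metis norm_scaleR abs_of_nonneg mult.right_neutral)
  moreover have "a \<noteq> 0" using a y0 by auto
  ultimately have "e j = e k" using a t by simp
  then show "k = j" using inj j k by (auto dest: inj_onD)
qed

text \<open>The optimal times at which a trajectory from \<open>y \<in> J_j\<close> reaches the junction and at which a
  trajectory to \<open>x \<in> J_i\<close> leaves it.\<close>
definition arrival_time :: "(nat \<Rightarrow> real^2) \<Rightarrow> nat \<Rightarrow> (nat \<Rightarrow> real \<Rightarrow> real) \<Rightarrow> nat \<Rightarrow> real^2 \<Rightarrow> real" where
  "arrival_time e N L j y = turning_time (coord e j y) (xi_minus L N j)"

definition departure_time :: "(nat \<Rightarrow> real^2) \<Rightarrow> nat \<Rightarrow> (nat \<Rightarrow> real \<Rightarrow> real) \<Rightarrow> nat \<Rightarrow> real^2 \<Rightarrow> real" where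
  "departure_time e N L i x = 1 - turning_time (coord e i x) (- xi_plus L N i)"

locale junction_lagrangian =
  fixes e :: "nat \<Rightarrow> real^2" and N :: nat and L L1 L2 :: "nat \<Rightarrow> real \<Rightarrow> real" and \<gamma> :: real
  assumes unit: "\<forall>k\<in>{1..N}. norm (e k) = 1"
    and distinct: "inj_on e {1..N}"
    and gamma: "\<gamma> > 0"
    and D1: "\<forall>k\<in>{1..N}. \<forall>t. (L k has_real_derivative L1 k t) (at t)"
    and D2: "\<forall>k\<in>{1..N}. \<forall>t. (L1 k has_real_derivative L2 k t) (at t)"
    and convex: "\<forall>k\<in>{1..N}. \<forall>t. L2 k t \<ge> \<gamma>"
begin

lemma branch_convex: "k \<in> {1..N} \<Longrightarrow> strongly_convex_lagrangian (L k) (L1 k) (L2 k) \<gamma>"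
  using D1 D2 convex gamma by unfold_locales auto

lemma reflected_branch_convex:
  "k \<in> {1..N} \<Longrightarrow> strongly_convex_lagrangian (\<lambda>u. L k (- u)) (\<lambda>u. - L1 k (- u)) (\<lambda>u. L2 k (- u)) \<gamma>"
  by (rule strongly_convex_lagrangian.reflect[OF branch_convex])

lemma deriv_L: "k \<in> {1..N} \<Longrightarrow> deriv (L k) t = L1 k t"
  using D1 by (simp add: DERIV_imp_deriv)

text \<open>\<open>K_k(0) \<ge> 0\<close>, so the zeros \<open>\<xi>_k\<^sup>\<plusminus>\<close> exist.\<close>
lemma L00_le: "k \<in> {1..N} \<Longrightarrow> L00 L N \<le> L k 0"
  unfolding L00_def by (intro Min_le) auto

lemma xi_minus_eq:
  assumes k: "k \<in> {1..N}"
  shows "xi_minus L N k = nonpos_zero (L k) (L1 k) (L00 L N)"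
  using deriv_L[OF k] by (simp add: xi_minus_def nonpos_zero_def Kfun_def legendre_gap_def)

lemma xi_plus_eq:
  assumes k: "k \<in> {1..N}"
  shows "xi_plus L N k = - nonpos_zero (\<lambda>u. L k (- u)) (\<lambda>u. - L1 k (- u)) (L00 L N)"
proof -
  interpret reflected: strongly_convex_lagrangian "\<lambda>u. L k (- u)" "\<lambda>u. - L1 k (- u)" "\<lambda>u. L2 k (- u)" \<gamma>
    using reflected_branch_convex[OF k] .
  define \<zeta> where "\<zeta> = nonpos_zero (\<lambda>u. L k (- u)) (\<lambda>u. - L1 k (- u)) (L00 L N)"
  have c: "L00 L N \<le> L k (- 0)" using L00_le[OF k] by simp
  note \<zeta> = reflected.nonpos_zero(1,2)[OF c, folded \<zeta>_def]
  have Kfun: "Kfun L N k s = legendre_gap (L k) (L1 k) (L00 L N) s" for s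
    using deriv_L[OF k] by (simp add: Kfun_def legendre_gap_def)
  show ?thesis
    unfolding xi_plus_def \<zeta>_def[symmetric]
  proof (rule the_equality)
    show "0 \<le> - \<zeta> \<and> Kfun L N k (- \<zeta>) = 0"
      using \<zeta> by (simp add: Kfun legendre_gap_reflect)
    fix \<xi> assume "0 \<le> \<xi> \<and> Kfun L N k \<xi> = 0"
    then have "- \<xi> \<le> 0" "legendre_gap (\<lambda>u. L k (- u)) (\<lambda>u. - L1 k (- u)) (L00 L N) (- \<xi>) = 0"
      by (auto simp: Kfun legendre_gap_reflect)
    then show "\<xi> = - \<zeta>" using reflected.nonpos_zero_unique[OF c] unfolding \<zeta>_def by fastforce
  qed
qed

lemma I0_iff_xi_minus: "k \<in> {1..N} \<Longrightarrow> k \<in> I0 L N \<longleftrightarrow> xi_minus L N k = 0"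
  using strongly_convex_lagrangian.nonpos_zero_eq_0_iff[OF branch_convex L00_le]
  by (auto simp: xi_minus_eq I0_def)

lemma I0_iff_xi_plus:
  assumes k: "k \<in> {1..N}"
  shows "k \<in> I0 L N \<longleftrightarrow> xi_plus L N k = 0"
proof -
  have "L00 L N \<le> L k (- 0)" using L00_le[OF k] by simp
  from strongly_convex_lagrangian.nonpos_zero_eq_0_iff[OF reflected_branch_convex[OF k] this]
  show ?thesis using k by (auto simp: xi_plus_eq I0_def)
qed

lemma xi_minus_nonpos: "k \<in> {1..N} \<Longrightarrow> xi_minus L N k \<le> 0"
  using strongly_convex_lagrangian.nonpos_zero(1)[OF branch_convex L00_le] by (simp add: xi_minus_eq)

lemma xi_plus_nonneg:
  assumes k: "k \<in> {1..N}"
  shows "0 \<le> xi_plus L N k"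
proof -
  have "L00 L N \<le> L k (- 0)" using L00_le[OF k] by simp
  from strongly_convex_lagrangian.nonpos_zero(1)[OF reflected_branch_convex[OF k] this]
  show ?thesis by (simp add: xi_plus_eq[OF k])
qed

lemma E1_on_branch:
  assumes j: "j \<in> {1..N}" and y: "y \<in> Jray e j"
  shows "E1 e N L \<tau> y = perspective (L j) (L00 L N) (coord e j y) \<tau>"
  using ray_eq_0_iff[OF _ y] branch_eq[OF unit distinct j y] unit j
  by (auto simp: E1_def perspective_def)

lemma E2_on_branch:
  assumes i: "i \<in> {1..N}" and x: "x \<in> Jray e i"
  shows "E2 e N L \<tau> x = perspective (\<lambda>u. L i (- u)) (L00 L N) (coord e i x) (1 - \<tau>) + ereal (L00 L N)"
  using ray_eq_0_iff[OF _ x] branch_eq[OF unit distinct i x] unit i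
  by (auto simp: E2_def perspective_def algebra_simps)

lemma valley_E1:
  assumes j: "j \<in> {1..N}" and y: "y \<in> Jray e j"
  shows "valley (\<lambda>\<tau>. E1 e N L \<tau> y) (arrival_time e N L j y)"
  using strongly_convex_lagrangian.perspective_valley[OF branch_convex[OF j] L00_le[OF j]]
    ray_coord(2)[OF _ y] unit j
  by (simp add: E1_on_branch[OF j y] arrival_time_def xi_minus_eq[OF j])

lemma valley_E2:
  assumes i: "i \<in> {1..N}" and x: "x \<in> Jray e i"
  shows "valley (\<lambda>\<tau>. E2 e N L \<tau> x) (departure_time e N L i x)"
proof -
  have "L00 L N \<le> L i (- 0)" using L00_le[OF i] by simp
  from strongly_convex_lagrangian.perspective_valley[OF reflected_branch_convex[OF i] this]
  show ?thesis
    using valley_reflect ray_coord(2)[OF _ x] unit i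
    by (simp add: E2_on_branch[OF i x] departure_time_def xi_plus_eq[OF i])
qed

lemma Delta_iff_arrival_before_departure:
  assumes ij: "i \<in> {1..N}" "j \<in> {1..N}" and yx: "y \<in> Jray e j" "x \<in> Jray e i"
  shows "(y, x) \<in> Delta e N L j i \<longleftrightarrow> arrival_time e N L j y < departure_time e N L i x"
proof -
  define a b m P where "a = coord e j y" "b = coord e i x" "m = xi_minus L N j" "P = xi_plus L N i"
  have "0 \<le> a" "0 \<le> b" using ray_coord(2) unit ij yx unfolding a_b_m_P_def by auto
  moreover have "m \<le> 0" "0 \<le> P"
    using xi_minus_nonpos[OF ij(2)] xi_plus_nonneg[OF ij(1)] unfolding a_b_m_P_def by auto
  ultimately have "(m \<noteq> 0 \<and> P \<noteq> 0 \<and> b / P - a / m < 1)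
      \<longleftrightarrow> turning_time a m < 1 - turning_time b (- P)"
  proof (cases "m = 0 \<or> P = 0")
    case False
    then have "m < 0" "0 < P" using \<open>m \<le> 0\<close> \<open>0 \<le> P\<close> by auto
    define u v where "u = a / - m" "v = b / P"
    have "0 \<le> u" "0 \<le> v" "b / P - a / m = v + u"
      using \<open>m < 0\<close> \<open>0 < P\<close> \<open>0 \<le> a\<close> \<open>0 \<le> b\<close> unfolding u_v_def by (auto simp: divide_nonneg_neg)
    moreover have "turning_time a m = min 1 u" "turning_time b (- P) = min 1 v"
      using False unfolding turning_time_def u_v_def by auto
    ultimately show ?thesis using False by (auto simp: min_def)
  qed (auto simp: turning_time_def min_def divide_less_0_iff zero_less_divide_iff)
  moreover have "(y, x) \<in> Delta e N L j i \<longleftrightarrow> m \<noteq> 0 \<and> P \<noteq> 0 \<and> b / P - a / m < 1"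
    using I0_iff_xi_minus[OF ij(2)] I0_iff_xi_plus[OF ij(1)] yx
    by (auto simp: Delta_def a_b_m_P_def)
  ultimately show ?thesis by (simp add: arrival_time_def departure_time_def a_b_m_P_def)
qed

text \<open>When arrival precedes departure, the optimal trajectory waits at the junction, and the
  cost of the two legs is affine in the coordinates.\<close>
lemma cost_at_turning_times:
  assumes ij: "i \<in> {1..N}" "j \<in> {1..N}" and yx: "y \<in> Jray e j" "x \<in> Jray e i"
    and before: "arrival_time e N L j y < departure_time e N L i x"
  shows "E1 e N L (arrival_time e N L j y) y + E2 e N L (departure_time e N L i x) x
       = ereal (D_linear e N L j i y x)"
proof -
  define a b m P where "a = coord e j y" "b = coord e i x" "m = xi_minus L N j" "P = xi_plus L N i"
  have "0 \<le> a" "0 \<le> b" using ray_coord(2) unit ij yx unfolding a_b_m_P_def by auto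
  have "(y, x) \<in> Delta e N L j i" using Delta_iff_arrival_before_departure[OF ij yx] before by simp
  then have "m \<noteq> 0" "P \<noteq> 0" and sum: "b / P + a / - m < 1"
    using I0_iff_xi_minus[OF ij(2)] I0_iff_xi_plus[OF ij(1)] by (auto simp: Delta_def a_b_m_P_def)
  then have m: "m < 0" and P: "0 < P"
    using xi_minus_nonpos[OF ij(2)] xi_plus_nonneg[OF ij(1)] unfolding a_b_m_P_def by auto
  have "0 \<le> a / - m" "0 \<le> b / P" using m P \<open>0 \<le> a\<close> \<open>0 \<le> b\<close> by (auto simp: divide_nonneg_neg)
  then have arrival: "arrival_time e N L j y = a / - m" and departure: "departure_time e N L i x = 1 - b / P"
    using sum m P by (auto simp: arrival_time_def departure_time_def turning_time_def a_b_m_P_def)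
  have E1: "E1 e N L (a / - m) y = ereal (- a * L1 j m)"
    using strongly_convex_lagrangian.perspective_at_turning[OF branch_convex[OF ij(2)] L00_le[OF ij(2)] \<open>0 \<le> a\<close>] m
    by (simp add: E1_on_branch[OF ij(2) yx(1)] a_b_m_P_def xi_minus_eq[OF ij(2)])
  have c: "L00 L N \<le> L i (- 0)" using L00_le[OF ij(1)] by simp
  have "E2 e N L (1 - b / P) x = ereal (- b * - L1 i P) + ereal (L00 L N)"
    using strongly_convex_lagrangian.perspective_at_turning[OF reflected_branch_convex[OF ij(1)] c \<open>0 \<le> b\<close>] P
    by (simp add: E2_on_branch[OF ij(1) yx(2)] a_b_m_P_def xi_plus_eq[OF ij(1)])
  then have E2: "E2 e N L (1 - b / P) x = ereal (b * L1 i P + L00 L N)" by simp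
  show ?thesis
    unfolding arrival departure E1 E2 by (simp add: D_linear_def deriv_L[OF ij(1)] deriv_L[OF ij(2)] a_b_m_P_def)
qed

end

theorem mainTheorem17:
  fixes e :: "nat \<Rightarrow> real^2" and N :: nat and L :: "nat \<Rightarrow> real \<Rightarrow> real"
    and L1 L2 :: "nat \<Rightarrow> real \<Rightarrow> real" and \<gamma> :: real
    and i j :: nat and y x :: "real^2"
  assumes N: "N \<ge> 1"
    and unit: "\<forall>k\<in>{1..N}. norm (e k) = 1"
    and distinct: "inj_on e {1..N}"
    and gamma: "\<gamma> > 0"
    and D1: "\<forall>k\<in>{1..N}. \<forall>t. (L k has_real_derivative L1 k t) (at t)"
    and D2: "\<forall>k\<in>{1..N}. \<forall>t. (L1 k has_real_derivative L2 k t) (at t)"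
    and C2: "\<forall>k\<in>{1..N}. continuous_on UNIV (L2 k)"
    and convex: "\<forall>k\<in>{1..N}. \<forall>t. L2 k t \<ge> \<gamma>"
    and ij: "i \<in> {1..N}" "j \<in> {1..N}"
    and yx: "y \<in> Jray e j" "x \<in> Jray e i"
  shows "D_junction e N L y x =
           (if (y, x) \<in> Delta e N L j i then ereal (D_linear e N L j i y x)
            else D_implicit e N L y x)"
proof -
  interpret junction_lagrangian e N L L1 L2 \<gamma>
    using unit distinct gamma D1 D2 convex by unfold_locales
  define p q where "p = arrival_time e N L j y" "q = departure_time e N L i x"
  have g: "valley (\<lambda>\<tau>. E1 e N L \<tau> y) p" and h: "valley (\<lambda>\<tau>. E2 e N L \<tau> x) q"
    using valley_E1[OF ij(2) yx(1)] valley_E2[OF ij(1) yx(2)] unfolding p_q_def by auto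
  have Delta: "(y, x) \<in> Delta e N L j i \<longleftrightarrow> p < q"
    using Delta_iff_arrival_before_departure[OF ij yx] unfolding p_q_def .
  show ?thesis
  proof (cases "p < q")
    case True
    then have "D_junction e N L y x = E1 e N L p y + E2 e N L q x"
      using valley_inf_separated[OF g h] unfolding D_junction_def by simp
    also have "\<dots> = ereal (D_linear e N L j i y x)"
      using cost_at_turning_times[OF ij yx] True unfolding p_q_def by simp
    finally show ?thesis using Delta True by simp
  next
    case False
    then have "D_junction e N L y x = D_implicit e N L y x"
      using valley_inf_overlap[OF g h] unfolding D_junction_def D_implicit_def by simp
    then show ?thesis using Delta False by simp
  qed
qed

end
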